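(* Let $0<\delta<\rho$, with $\rho=3-2\sqrt2$, and let $\ell(z)=C_1(z-\rho)^{-4}+C_2(z-\rho)^{-4}\log\frac{1}{1-z/\rho}$ with $C_1,C_2$ as described in the context. Then for all $n\in\mathbb{N}$, \[\frac{1}{2\pi i}\int_{|z|=\delta}\frac{\ell(z)}{z^{n+1}}\,dz\ \ge\ \rho^{-n}n^3\,(8.07\,\log n+1.37),\] where the right-hand side is interpreted as $0$ when $n=0$.
   Context: Let $(d_n)_{n\ge0}$ be the rational sequence with $(d_0,\dots,d_6)=(72,1932,31248,\frac{790101}{2},\frac{17208645}{4},\frac{338898609}{8},\frac{1551478257}{4})$ satisfying $\sum_{k=0}^7 r_k(n)d_{n+k}=0$ for all $n\ge0$, where $r_0(n) = -(n+8)(n+7)(n+6)^2(12232n^3+298144n^2+2412586n+6469077)$, $r_1(n) = (n+8)(183480n^6+7655560n^5+131977142n^4+1202876299n^3+6112196895n^2+16418149668n+18219511026)$, $r_2(n) = -(n+8)(941864n^6+38326904n^5+644300514n^4+5727711699n^3+28407144241n^2+74557779538n+80949464718)$, $r_3(n) = 1993816n^7+97303624n^6+2021855198n^5+23184921987n^4+158457515673n^3+645518710454n^2+1451619424860n+1390493835900$, $r_4(n) = -1993816n^7-98090344n^6-2054897438n^5-23758375953n^4-163720428321n^3-672459054524n^2-1524577250976n-1472211879228$, $r_5(n) = (n+6)(941864n^6+40789672n^5+730497394n^4+6921881565n^3+36590122947n^2+102300885158n+118218544398)$, $r_6(n) = (n+6)(183480n^6+7756760n^5+135519142n^4+1252328453n^3+6456460129n^2+17612930492n+19872693550)$,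 $r_7(n) = (n+7)(n+6)(n+8)^2(12232n^3+215600n^2+1256970n+2435511)$. Let $f(z)=\sum_{n\ge0}d_nz^n$ and $\rho=3-2\sqrt2$. The series $f$ converges for $|z|<\rho$ and extends analytically to $\Delta=\{z:|z|<1\}\setminus[\rho,1]$. Here $\log$ denotes the principal branch ($\log(re^{i\theta})=\log r+i\theta$, $-\pi<\theta\le\pi$). On $\Delta\cap\{|z-\rho|<\rho\}$, $f$ has the (unique) decomposition \[f(z)=C_1(z-\rho)^{-4}+C_2(z-\rho)^{-4}L(z)+(z-\rho)^{-3}\bigl(h_0(z)+h_1(z)L(z)+h_2(z)L(z)^2\bigr),\quad L(z)=\log\tfrac{1}{1-z/\rho},\] with real constants $C_1,C_2$ and functions $h_0,h_1,h_2$ analytic on the disk $|z-\rho|<\rho$; numerically $C_1\in[0.0598-4.79\cdot10^{-5},\,0.0598+4.79\cdot10^{-5}]$ and $C_2\in[0.0420-3.14\cdot10^{-5},\,0.0420+3.14\cdot10^{-5}]$. *)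

theory Defs
  imports "HOL-Complex_Analysis.Complex_Analysis"
begin

definition rho :: real where "rho = 3 - 2 * sqrt 2"

definition rcoef :: "nat \<Rightarrow> nat \<Rightarrow> real" where
  "rcoef k m = (let n = real m in
    if k = 0 then -(n+8)*(n+7)*(n+6)^2*(12232*n^3+298144*n^2+2412586*n+6469077)
    else if k = 1 then (n+8)*(183480*n^6+7655560*n^5+131977142*n^4+1202876299*n^3+6112196895*n^2+16418149668*n+18219511026)
    else if k = 2 then -(n+8)*(941864*n^6+38326904*n^5+644300514*n^4+5727711699*n^3+28407144241*n^2+74557779538*n+80949464718)
    else if k = 3 then 1993816*n^7+97303624*n^6+2021855198*n^5+23184921987*n^4+158457515673*n^3+645518710454*n^2+1451619424860*n+1390493835900
    else if k = 4 then -1993816*n^7-98090344*n^6-2054897438*n^5-23758375953*n^4-163720428321*n^3-672459054524*n^2-1524577250976*n-1472211879228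
    else if k = 5 then (n+6)*(941864*n^6+40789672*n^5+730497394*n^4+6921881565*n^3+36590122947*n^2+102300885158*n+118218544398)
    else if k = 6 then (n+6)*(183480*n^6+7756760*n^5+135519142*n^4+1252328453*n^3+6456460129*n^2+17612930492*n+19872693550)
    else (n+7)*(n+6)*(n+8)^2*(12232*n^3+215600*n^2+1256970*n+2435511))"

definition Delta :: "complex set" where
  "Delta = ball 0 1 - {complex_of_real x | x. rho \<le> x \<and> x \<le> 1}"

definition ell :: "real \<Rightarrow> real \<Rightarrow> complex \<Rightarrow> complex" where
  "ell C1 C2 z = of_real C1 / (z - of_real rho) ^ 4
     + of_real C2 / (z - of_real rho) ^ 4 * Ln (1 / (1 - z / of_real rho))"

end

theory Submission
  imports Defs
begin

(* Since ell is holomorphic on the disc |z| < rho, the integral is its n-th Taylor coefficient.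
   Both (X - c)^-k and (X - c)^-k log(1/(1 - X/c)) satisfy first-order linear differential
   equations, whose coefficient recurrences give
     [z^n] ell = rho^-(n+4) binom(n+3, 3) (C1 + C2 (H(n+3) - H(3))).
   With rho^-4 = 577 + 408 sqrt 2, H(n+3) >= ln n + gamma and gamma >= 0.57713, the claim becomes
   an inequality between x^3 ln x, x^3, x^2 ln x and x^2 terms. The x^3 ln x coefficients
   (8.0719... against 8.07) differ by only 0.002, so the surplus there absorbs the x^3 deficit
   (about 0.018) only once ln x > 9.2; for x below 2^14 the x^2 ln x term absorbs it instead. *)

section \<open>Coefficients of (X - c)^-k and (X - c)^-k log(1/(1 - X/c))\<close>

lemma fps_nth_Suc_of_linear_ode:
  fixes f g :: "'a::field_char_0 fps"
  assumes c: "c \<noteq> 0"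
    and ode: "(fps_X - fps_const c) * fps_deriv f + fps_const a * f + g = 0"
  shows "f $ Suc n = ((of_nat n + a) * f $ n + g $ n) / (c * of_nat (Suc n))"
proof -
  have "((fps_X - fps_const c) * fps_deriv f + fps_const a * f + g) $ n = 0"
    using ode by simp
  then have "of_nat n * f $ n - c * of_nat (Suc n) * f $ Suc n + a * f $ n + g $ n = 0"
    by (cases n) (simp_all add: algebra_simps)
  then show ?thesis
    using c by (simp add: field_simps del: of_nat_Suc)
qed

lemma inverse_X_minus_const_power_ode:
  fixes c :: "'a::field_char_0"
  assumes c: "c \<noteq> 0"
  shows "(fps_X - fps_const c) * fps_deriv (inverse ((fps_X - fps_const c) ^ k))
           + fps_const (of_nat k) * inverse ((fps_X - fps_const c) ^ k) = 0"
proof -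
  define P where "P = fps_X - fps_const c"
  define E where "E = inverse (P ^ k)"
  have dP: "fps_deriv P = 1"
    by (simp add: P_def)
  have P0: "(P ^ k) $ 0 \<noteq> 0"
    using c by (simp add: P_def fps_nth_power_0)
  have "P * fps_deriv E = - (of_nat k * (P * P ^ (k - 1))) * E ^ 2"
    unfolding E_def fps_inverse_deriv[OF P0] by (simp add: fps_deriv_power fps_of_nat dP algebra_simps)
  also have "of_nat k * (P * P ^ (k - 1)) = of_nat k * P ^ k"
    by (cases k) simp_all
  also have "- (of_nat k * P ^ k) * E ^ 2 = - of_nat k * (P ^ k * E) * E"
    by (simp add: power2_eq_square algebra_simps)
  also have "P ^ k * E = 1"
    unfolding E_def using P0 by (simp add: inverse_mult_eq_1')
  finally have "P * fps_deriv E + of_nat k * E = 0"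
    by simp
  then show ?thesis
    by (simp only: E_def P_def fps_of_nat)
qed

lemma fps_nth_inverse_X_minus_const_power:
  fixes c :: "'a::field_char_0"
  assumes c: "c \<noteq> 0"
  shows "inverse ((fps_X - fps_const c) ^ Suc k) $ n = of_nat ((n + k) choose n) / ((- c) ^ Suc k * c ^ n)"
proof (induction n)
  case 0
  show ?case
    using c by (simp add: fps_inverse_def fps_nth_power_0 inverse_mult_distrib divide_inverse)
next
  case (Suc n)
  have "(Suc n + k choose Suc n) * Suc n = Suc (n + k) * (n + k choose n)"
    using Suc_times_binomial_eq[of "n + k" n] by (simp only: add_Suc)
  then have choose: "of_nat (Suc n + k choose Suc n) * of_nat (Suc n)
      = (of_nat n + of_nat (Suc k)) * (of_nat (n + k choose n) :: 'a)"
    by (metis add.commute add_Suc_right of_nat_add of_nat_mult)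
  have ode: "(fps_X - fps_const c) * fps_deriv (inverse ((fps_X - fps_const c) ^ Suc k))
      + fps_const (of_nat (Suc k)) * inverse ((fps_X - fps_const c) ^ Suc k) + 0 = 0"
    using inverse_X_minus_const_power_ode[OF c, of "Suc k"] by (simp only: add_0_right)
  have "inverse ((fps_X - fps_const c) ^ Suc k) $ Suc n
      = (of_nat n + of_nat (Suc k)) * of_nat (n + k choose n) / ((- c) ^ Suc k * c ^ n * (c * of_nat (Suc n)))"
    unfolding fps_nth_Suc_of_linear_ode[OF c ode] Suc by simp
  also have "\<dots> = of_nat (Suc n + k choose Suc n) / ((- c) ^ Suc k * c ^ Suc n)"
    unfolding choose[symmetric] using c by (simp del: of_nat_Suc binomial_Suc_Suc)
  finally show ?case .
qed

definition fps_ln_inv_one_minus :: "'a::field \<Rightarrow> 'a fps" where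
  "fps_ln_inv_one_minus c = Abs_fps (\<lambda>n. if n = 0 then 0 else 1 / (of_nat n * c ^ n))"

lemma fps_ln_inv_one_minus_ode:
  fixes c :: "'a::field_char_0"
  assumes c: "c \<noteq> 0"
  shows "(fps_X - fps_const c) * fps_deriv (fps_ln_inv_one_minus c) = -1"
proof (rule fps_ext)
  fix n
  have deriv_nth: "fps_deriv (fps_ln_inv_one_minus c) $ m = 1 / c ^ Suc m" for m
    using c by (simp add: fps_ln_inv_one_minus_def del: of_nat_Suc)
  show "((fps_X - fps_const c) * fps_deriv (fps_ln_inv_one_minus c)) $ n = (-1 :: 'a fps) $ n"
    using c by (cases n) (simp_all add: algebra_simps deriv_nth del: fps_deriv_nth)
qed

lemma fps_nth_inverse_X_minus_const_power_mult_ln: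
  fixes c :: "'a::real_normed_field"
  assumes c: "c \<noteq> 0"
  shows "(inverse ((fps_X - fps_const c) ^ Suc k) * fps_ln_inv_one_minus c) $ n
           = inverse ((fps_X - fps_const c) ^ Suc k) $ n * (harm (n + k) - harm k)"
proof (induction n)
  case 0
  show ?case
    by (simp add: fps_ln_inv_one_minus_def)
next
  case (Suc n)
  define E where "E = inverse ((fps_X - fps_const c) ^ Suc k)"
  define L where "L = fps_ln_inv_one_minus c"
  have IH: "(E * L) $ n = E $ n * (harm (n + k) - harm k)"
    using Suc unfolding E_def L_def .
  have E_ode: "(fps_X - fps_const c) * fps_deriv E + fps_const (of_nat (Suc k)) * E + 0 = 0"
    unfolding E_def using inverse_X_minus_const_power_ode[OF c, of "Suc k"] by (simp only: add_0_right)
  have "(fps_X - fps_const c) * fps_deriv (E * L)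
      = ((fps_X - fps_const c) * fps_deriv E) * L + E * ((fps_X - fps_const c) * fps_deriv L)"
    by (simp add: algebra_simps)
  also have "\<dots> = - (fps_const (of_nat (Suc k)) * (E * L)) - E"
    using E_ode fps_ln_inv_one_minus_ode[OF c] unfolding L_def
    by (simp add: eq_neg_iff_add_eq_0[symmetric] add_eq_0_iff2 mult.assoc)
  finally have G_ode: "(fps_X - fps_const c) * fps_deriv (E * L) + fps_const (of_nat (Suc k)) * (E * L) + E = 0"
    by simp
  have harm_step: "harm (Suc n + k) - harm k = (harm (n + k) - harm k) + inverse (of_nat n + of_nat (Suc k) :: 'a)"
    by (simp add: harm_Suc add_ac)
  have nz: "of_nat n + of_nat (Suc k) \<noteq> (0 :: 'a)"
    by (metis add_Suc_right of_nat_add of_nat_neq_0)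
  have "((m * (e * h) + e) / d = (m * e + 0) / d * (h + inverse m))" if "m \<noteq> 0" for m e h d :: 'a
    using that by (cases "d = 0") (simp_all add: field_simps)
  from this[OF nz] show ?case
    unfolding E_def[symmetric] L_def[symmetric]
      fps_nth_Suc_of_linear_ode[OF c G_ode] fps_nth_Suc_of_linear_ode[OF c E_ode] IH harm_step fps_zero_nth .
qed

section \<open>The Taylor coefficients of ell\<close>

lemma Re_one_minus_divide_pos:
  fixes z c :: complex
  assumes "norm z < norm c"
  shows "Re (1 - z / c) > 0"
proof -
  have "Re (z / c) \<le> norm (z / c)"
    by (rule complex_Re_le_cmod)
  also have "norm (z / c) < 1"
    using assms by (simp add: norm_divide divide_less_eq)
  finally show ?thesis
    by simp
qed

lemma one_minus_divide_not_nonpos_Reals: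
  fixes z c :: complex
  assumes "norm z < norm c"
  shows "1 - z / c \<notin> \<real>\<^sub>\<le>\<^sub>0" "1 / (1 - z / c) \<notin> \<real>\<^sub>\<le>\<^sub>0"
proof -
  have "Re (1 - z / c) > 0"
    using Re_one_minus_divide_pos[OF assms] .
  moreover have "Re (1 / w) > 0" if "Re w > 0" for w :: complex
    using that by (simp add: Re_complex_div_gt_0)
  ultimately have "Re (1 / (1 - z / c)) > 0"
    by blast
  with \<open>Re (1 - z / c) > 0\<close> show "1 - z / c \<notin> \<real>\<^sub>\<le>\<^sub>0" "1 / (1 - z / c) \<notin> \<real>\<^sub>\<le>\<^sub>0"
    by (auto simp: complex_nonpos_Reals_iff)
qed

lemma has_fps_expansion_Ln_inv_one_minus:
  fixes c :: complex
  assumes c: "c \<noteq> 0"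
  shows "(\<lambda>z. Ln (1 / (1 - z / c))) has_fps_expansion fps_ln_inv_one_minus c"
proof (rule has_fps_expansionI)
  have "eventually (\<lambda>z. z \<in> ball 0 (norm c)) (nhds (0::complex))"
    using c by (intro eventually_nhds_in_open) auto
  then show "eventually (\<lambda>z. (\<lambda>n. fps_ln_inv_one_minus c $ n * z ^ n) sums Ln (1 / (1 - z / c))) (nhds 0)"
  proof eventually_elim
    case (elim z)
    then have z: "norm z < norm c"
      by simp
    then have "norm (- (z / c)) < 1"
      using c by (simp add: norm_divide divide_less_eq)
    from sums_minus[OF Ln_series'[OF this]]
    have "(\<lambda>n. (z / c) ^ n / of_nat n) sums - Ln (1 - z / c)"
      by simp
    also have "(\<lambda>n. (z / c) ^ n / of_nat n) = (\<lambda>n. fps_ln_inv_one_minus c $ n * z ^ n)"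
      by (simp add: fps_ln_inv_one_minus_def power_divide fun_eq_iff)
    also have "- Ln (1 - z / c) = Ln (1 / (1 - z / c))"
      using Ln_inverse[OF one_minus_divide_not_nonpos_Reals(1)[OF z]] by (simp add: inverse_eq_divide)
    finally show ?case .
  qed
qed

lemma contour_integral_circlepath_fps_nth:
  assumes hol: "f holomorphic_on ball 0 R" and F: "f has_fps_expansion F"
    and r: "0 < r" "r < R"
  shows "contour_integral (circlepath 0 r) (\<lambda>z. f z / z ^ (n + 1)) = 2 * of_real pi * \<i> * F $ n"
proof -
  have sub: "cball 0 r \<subseteq> ball 0 R"
    using r by auto
  have "((\<lambda>z. f z / (z - 0) ^ Suc n) has_contour_integral (2 * pi * \<i>) / fact n * (deriv ^^ n) f 0)
          (circlepath 0 r)"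
    using r sub
    by (intro Cauchy_has_contour_integral_higher_derivative_circlepath
        holomorphic_on_imp_continuous_on holomorphic_on_subset[OF hol]) auto
  then show ?thesis
    using fps_nth_fps_expansion[OF F, of n] by (simp add: contour_integral_unique)
qed

lemma rho_pos: "0 < rho"
proof -
  have "sqrt 2 < 3 / 2"
    by (rule real_less_lsqrt) (auto simp: power2_eq_square)
  then show ?thesis
    unfolding rho_def by simp
qed

lemma ell_holomorphic: "ell C1 C2 holomorphic_on ball 0 rho"
proof -
  have "z \<noteq> of_real rho" "1 - z / of_real rho \<noteq> 0" "1 / (1 - z / of_real rho) \<notin> \<real>\<^sub>\<le>\<^sub>0"
    if "z \<in> ball 0 rho" for z :: complex
  proof -
    from that have z: "norm z < norm (complex_of_real rho)"
      using rho_pos by simp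
    then show "z \<noteq> of_real rho" "1 - z / of_real rho \<noteq> 0"
      using Re_one_minus_divide_pos[OF z] by auto
    show "1 / (1 - z / of_real rho) \<notin> \<real>\<^sub>\<le>\<^sub>0"
      using one_minus_divide_not_nonpos_Reals(2)[OF z] .
  qed
  then show ?thesis
    unfolding ell_def using rho_pos by (intro holomorphic_intros) auto
qed

lemma ell_has_fps_expansion:
  "ell C1 C2 has_fps_expansion
     fps_const (of_real C1) * inverse ((fps_X - fps_const (of_real rho)) ^ 4)
     + fps_const (of_real C2) * (inverse ((fps_X - fps_const (of_real rho)) ^ 4) * fps_ln_inv_one_minus (of_real rho))"
proof -
  have ell_eq: "ell C1 C2 = (\<lambda>z. of_real C1 * inverse ((z - of_real rho) ^ 4)
      + of_real C2 * (inverse ((z - of_real rho) ^ 4) * Ln (1 / (1 - z / of_real rho))))"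
    by (simp add: ell_def divide_inverse fun_eq_iff)
  show ?thesis
    unfolding ell_eq using rho_pos
    by (intro has_fps_expansion_add has_fps_expansion_cmult_left has_fps_expansion_mult
        has_fps_expansion_inverse has_fps_expansion_power has_fps_expansion_diff has_fps_expansion_fps_X
        has_fps_expansion_const has_fps_expansion_Ln_inv_one_minus) (simp_all add: fps_nth_power_0)
qed

lemma ell_contour_integral:
  assumes "0 < \<delta>" "\<delta> < rho"
  shows "contour_integral (circlepath 0 \<delta>) (\<lambda>z. ell C1 C2 z / z ^ (n + 1)) / (2 * of_real pi * \<i>)
     = of_real (real ((n + 3) choose n) * (C1 + C2 * (harm (n + 3) - harm 3)) / rho ^ (n + 4))"
proof -
  have rho: "complex_of_real rho \<noteq> 0"
    using rho_pos by simp
  have "contour_integral (circlepath 0 \<delta>) (\<lambda>z. ell C1 C2 z / z ^ (n + 1)) / (2 * of_real pi * \<i>)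
      = (fps_const (of_real C1) * inverse ((fps_X - fps_const (of_real rho)) ^ 4)
         + fps_const (of_real C2) * (inverse ((fps_X - fps_const (of_real rho)) ^ 4)
           * fps_ln_inv_one_minus (of_real rho))) $ n"
    unfolding contour_integral_circlepath_fps_nth[OF ell_holomorphic ell_has_fps_expansion assms] by simp
  also have "\<dots> = of_real (real ((n + 3) choose n) * (C1 + C2 * (harm (n + 3) - harm 3)) / rho ^ (n + 4))"
  proof -
    have E: "inverse ((fps_X - fps_const (complex_of_real rho)) ^ 4) $ n = of_nat ((n + 3) choose n) / of_real rho ^ (n + 4)"
      using fps_nth_inverse_X_minus_const_power[OF rho, of 3 n] by (simp add: power_add mult.commute)
    have EL: "(inverse ((fps_X - fps_const (complex_of_real rho)) ^ 4) * fps_ln_inv_one_minus (of_real rho)) $ n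
        = inverse ((fps_X - fps_const (complex_of_real rho)) ^ 4) $ n * (harm (n + 3) - harm 3)"
      using fps_nth_inverse_X_minus_const_power_mult_ln[OF rho, of 3 n] by simp
    show ?thesis
      unfolding fps_add_nth fps_mult_left_const_nth EL E
      by (simp only: of_real_mult of_real_divide of_real_add of_real_diff of_real_harm
          of_real_of_nat_eq of_real_power) (simp add: algebra_simps add_divide_distrib diff_divide_distrib)
  qed
  finally show ?thesis .
qed

section \<open>Numerical estimates\<close>

lemma ln2_ge_693147: "0.693147 \<le> ln (2::real)"
  and ln2_le_693148: "ln (2::real) \<le> 0.693148"
  using ln_approx_bounds[of 2 6] by (simp_all add: eval_nat_numeral)

lemma euler_mascheroni_ge_57713: "0.57713 \<le> (euler_mascheroni :: real)"
proof -
  have "ln (real (30 + 2)) = 5 * ln (2::real)"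
    using ln_realpow[of 2 5] by simp
  then show ?thesis
    using euler_mascheroni_lower[of 30] ln2_le_693148 by (simp add: harm_expand)
qed

lemma harm_ge_ln_plus_euler_mascheroni:
  assumes "0 < n"
  shows "ln (real n) + euler_mascheroni \<le> (harm n :: real)"
proof -
  obtain m where n: "n = Suc m"
    using assms gr0_implies_Suc by blast
  have "euler_mascheroni \<le> harm (Suc m) - ln (real (Suc m))"
    by (rule decseq_ge[OF decseq_harm_diff_ln LIMSEQ_Suc[OF euler_mascheroni_LIMSEQ]])
  then show ?thesis
    unfolding n by simp
qed

lemma cubic_log_bound:
  fixes x :: real
  assumes x: "1 \<le> x"
  shows "x ^ 3 * (8.07 * ln x + 1.37) \<le> 192.333 * (x ^ 3 + 6 * x ^ 2) * (0.00703 + 0.0419686 * ln x)"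
proof -
  define L where "L = ln x"
  have L: "0 \<le> L"
    using x by (simp add: L_def)
  have ln_16384: "9.704 \<le> ln (16384 :: real)"
    using ln_realpow[of 2 14] ln2_ge_693147 by simp
  have Lx: "0 \<le> L * x"
    using x L by simp
  have key: "0.0179 * x \<le> 8.11 + 48.43 * L + 0.0019 * L * x"
  proof (cases "x \<le> 3")
    case True
    then show ?thesis
      using L Lx by simp
  next
    case False
    show ?thesis
    proof (cases "x \<le> 16384")
      case True
      have "ln 16384 / 16384 \<le> L / x"
        unfolding L_def using exp_le False True by (intro ln_x_over_x_mono) auto
      then have "ln 16384 / 16384 * x \<le> L"
        using x by (simp add: field_simps)
      moreover have "9.704 / 16384 * x \<le> ln 16384 / 16384 * x"
        using ln_16384 x by (intro mult_right_mono) auto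
      ultimately have "9.704 / 16384 * x \<le> L"
        by linarith
      then show ?thesis
        using L Lx by simp
    next
      case False
      then have "ln 16384 \<le> L"
        unfolding L_def by simp
      then have "9.704 \<le> L"
        using ln_16384 by linarith
      then have "0.0179 * x \<le> 0.0019 * L * x"
        using x by (intro mult_right_mono) auto
      then show ?thesis
        using L by simp
    qed
  qed
  have "192.333 * (x ^ 3 + 6 * x ^ 2) * (0.00703 + 0.0419686 * L) - x ^ 3 * (8.07 * L + 1.37)
      = x ^ 2 * (8.11 + 48.43 * L + 0.0019 * L * x - 0.0179 * x)
        + 0.0000467438 * (x ^ 3 * L) + 0.00000099 * x ^ 3 + 0.00260594 * x ^ 2 + 0.0016804628 * (x ^ 2 * L)"
    by (simp add: field_simps power2_eq_square power3_eq_cube)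
  also have "\<dots> \<ge> 0"
    using key x L by (intro add_nonneg_nonneg mult_nonneg_nonneg) auto
  finally show ?thesis
    unfolding L_def by simp
qed

lemma six_times_binomial_plus_3:
  "6 * real ((n + 3) choose n) = (real n + 1) * (real n + 2) * (real n + 3)"
proof -
  have "real ((n + 3) choose n) = fact (n + 3) / (fact n * fact 3)"
    by (subst binomial_fact) auto
  also have "fact (n + 3) = (real n + 3) * (real n + 2) * (real n + 1) * fact n"
    by (simp add: eval_nat_numeral algebra_simps)
  also have "\<dots> / (fact n * fact 3) = (real n + 1) * (real n + 2) * (real n + 3) / 6"
    by (simp add: fact_numeral)
  finally show ?thesis
    by simp
qed

lemma inverse_rho_pow4: "inverse (rho ^ 4) = 577 + 408 * sqrt 2"
proof -
  have s: "sqrt 2 * sqrt 2 = (2::real)"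
    by simp
  have "rho * (3 + 2 * sqrt 2) = 1"
    unfolding rho_def by (simp add: algebra_simps s)
  then have "inverse (rho ^ 4) = (3 + 2 * sqrt 2) ^ 4"
    by (metis inverse_unique power_inverse)
  also have "\<dots> = 577 + 408 * sqrt 2"
    by (simp add: eval_nat_numeral algebra_simps s)
  finally show ?thesis .
qed

lemma singular_coefficient_lower_bound:
  fixes C1 C2 :: real
  assumes n: "1 \<le> n"
    and C1: "0.0598 - 479 / 10000000 \<le> C1" and C2: "0.0420 - 314 / 10000000 \<le> C2"
  shows "real n ^ 3 * (8.07 * ln (real n) + 1.37)
           \<le> (577 + 408 * sqrt 2) * real ((n + 3) choose n) * (C1 + C2 * (harm (n + 3) - harm 3))"
proof -
  define x where "x = real n"
  define h :: real where "h = harm (n + 3) - harm 3"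
  have x: "1 \<le> x"
    using n by (simp add: x_def)
  have h_nonneg: "0 \<le> h"
    by (simp add: h_def harm_mono)
  have h_ge: "ln x + 0.57713 - 11 / 6 \<le> h"
  proof -
    have "ln x \<le> ln (real (n + 3))"
      using x by (simp add: x_def)
    moreover have "ln (real (n + 3)) + euler_mascheroni \<le> harm (n + 3)"
      by (rule harm_ge_ln_plus_euler_mascheroni) simp
    moreover have "harm 3 = (11 / 6 :: real)"
      by (simp add: harm_expand)
    ultimately show ?thesis
      using euler_mascheroni_ge_57713 unfolding h_def by linarith
  qed
  have "0.0419686 * (ln x + 0.57713 - 11 / 6) \<le> 0.0419686 * h"
    using h_ge by simp
  also have "\<dots> \<le> C2 * h"
    using C2 h_nonneg by (intro mult_right_mono) auto
  finally have factor: "0.00703 + 0.0419686 * ln x \<le> C1 + C2 * h"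
    using C1 by simp
  have "6 * real ((n + 3) choose n) = x ^ 3 + 6 * x ^ 2 + 11 * x + 6"
    unfolding six_times_binomial_plus_3 x_def by (simp add: algebra_simps power2_eq_square power3_eq_cube)
  then have "192.333 * (x ^ 3 + 6 * x ^ 2) \<le> (6 * 192.333) * real ((n + 3) choose n)"
    using x by simp
  also have "\<dots> \<le> (577 + 408 * sqrt 2) * real ((n + 3) choose n)"
    using real_le_rsqrt[of "1.414213" 2] by (intro mult_right_mono) (simp_all add: power2_eq_square)
  finally have binomial: "192.333 * (x ^ 3 + 6 * x ^ 2) \<le> (577 + 408 * sqrt 2) * real ((n + 3) choose n)" .
  have "real n ^ 3 * (8.07 * ln (real n) + 1.37) \<le> 192.333 * (x ^ 3 + 6 * x ^ 2) * (0.00703 + 0.0419686 * ln x)"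
    using cubic_log_bound[OF x] by (simp add: x_def)
  also have "\<dots> \<le> (577 + 408 * sqrt 2) * real ((n + 3) choose n) * (C1 + C2 * h)"
    using x by (intro mult_mono[OF binomial factor]) auto
  finally show ?thesis
    unfolding h_def .
qed

theorem proposition3p2:
  fixes d :: "nat \<Rightarrow> real" and F h0 h1 h2 :: "complex \<Rightarrow> complex"
    and C1 C2 \<delta> :: real and n :: nat
  assumes d_init: "d 0 = 72" "d 1 = 1932" "d 2 = 31248" "d 3 = 790101 / 2"
      "d 4 = 17208645 / 4" "d 5 = 338898609 / 8" "d 6 = 1551478257 / 4"
    and d_rec: "\<And>m. (\<Sum>k\<le>7. rcoef k m * d (m + k)) = 0"
    and F_hol: "F holomorphic_on Delta"
    and F_series: "\<And>z. norm z < rho \<Longrightarrow> (\<lambda>m. of_real (d m) * z ^ m) sums F z"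
    and h_hol: "h0 holomorphic_on ball (of_real rho) rho"
      "h1 holomorphic_on ball (of_real rho) rho"
      "h2 holomorphic_on ball (of_real rho) rho"
    and decomp: "\<And>z. z \<in> Delta \<inter> ball (of_real rho) rho \<Longrightarrow>
        F z = ell C1 C2 z + (h0 z + h1 z * Ln (1 / (1 - z / of_real rho))
              + h2 z * (Ln (1 / (1 - z / of_real rho))) ^ 2) / (z - of_real rho) ^ 3"
    and C1_bd: "0.0598 - 479 / 10000000 \<le> C1" "C1 \<le> 0.0598 + 479 / 10000000"
    and C2_bd: "0.0420 - 314 / 10000000 \<le> C2" "C2 \<le> 0.0420 + 314 / 10000000"
    and \<delta>: "0 < \<delta>" "\<delta> < rho"
  shows "Im (contour_integral (circlepath 0 \<delta>) (\<lambda>z. ell C1 C2 z / z ^ (n + 1)) / (2 * of_real pi * \<i>)) = 0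
       \<and> Re (contour_integral (circlepath 0 \<delta>) (\<lambda>z. ell C1 C2 z / z ^ (n + 1)) / (2 * of_real pi * \<i>))
         \<ge> (if n = 0 then 0 else rho powr (- real n) * real n ^ 3 * (8.07 * ln (real n) + 1.37))"
proof -
  (* The integral is an explicit Taylor coefficient of ell, so only the lower bounds on C1 and C2
     enter; the hypotheses on d, F and h0, h1, h2 only describe where ell comes from. *)
  define c where "c = real ((n + 3) choose n) * (C1 + C2 * (harm (n + 3) - harm 3))"
  have integral: "contour_integral (circlepath 0 \<delta>) (\<lambda>z. ell C1 C2 z / z ^ (n + 1)) / (2 * of_real pi * \<i>)
      = of_real (c / rho ^ (n + 4))"
    unfolding c_def by (rule ell_contour_integral[OF \<delta>])
  have "(if n = 0 then 0 else rho powr (- real n) * real n ^ 3 * (8.07 * ln (real n) + 1.37)) \<le> c / rho ^ (n + 4)"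
  proof (cases "n = 0")
    case True
    have "0 \<le> c"
      using C1_bd(1) C2_bd(1) unfolding c_def by (simp add: harm_mono)
    then show ?thesis
      using True rho_pos by simp
  next
    case False
    have "c / rho ^ (n + 4) = rho powr (- real n) * (inverse (rho ^ 4) * c)"
      using rho_pos by (simp add: powr_minus powr_realpow power_add divide_inverse)
    also have "\<dots> = rho powr (- real n) * ((577 + 408 * sqrt 2) * c)"
      unfolding inverse_rho_pow4 ..
    also have "\<dots> \<ge> rho powr (- real n) * (real n ^ 3 * (8.07 * ln (real n) + 1.37))"
      using singular_coefficient_lower_bound[OF _ C1_bd(1) C2_bd(1), of n] False
      unfolding c_def by (intro mult_left_mono) (auto simp: mult.assoc)
    finally show ?thesis
      using False by (simp add: mult.assoc)
  qed
  then show ?thesis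
    unfolding integral by simp
qed

end
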